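(* The set $\mathfrak{I}_{W} = \{ c_d^2, c_{(d-1)d}^2,\dots, c_{12}^2\}$ separates orbits for the action of $W_d(\mathbb{C})$ on $L$ and is a generating set for the field $\mathbb{C}(L)^{W_d(\mathbb{C})}$.
   Context: Let $d\ge 2$. Let $L\subset \mathbb{C}^d\oplus \mathfrak{so}(d,\mathbb{C})$ (where $\mathfrak{so}(d,\mathbb{C})$ is the space of complex skew-symmetric $d\times d$ matrices) be the linear subspace of pairs $(v,M)$ with $v=(0,\dots,0,c_d)^\top$ and $M$ the skew-symmetric tridiagonal matrix whose only possibly nonzero entries are $M_{i,i+1}=c_{i(i+1)}=-M_{i+1,i}$ for $1\le i\le d-1$. Let $W_d(\mathbb{C})$ be the group of diagonal $d\times d$ matrices with diagonal entries $w_i\in\{-1,1\}$; it acts on $L$ by $D\cdot(v,M)=(Dv,DMD^\top)$, i.e. $c_d\mapsto w_dc_d$ and $c_{i(i+1)}\mapsto w_iw_{i+1}c_{i(i+1)}$. The functions $c_d^2, c_{i(i+1)}^2$ are $W_d(\mathbb{C})$-invariant functions on $L$. $\mathbb{C}(L)^{W_d(\mathbb{C})}$ denotes the field of $W_d(\mathbb{C})$-invariant rational functions on $L$. A set of rational invariants separates orbits (is separating) if there is a non-empty Zariski-open subset of $L$ on which two points lie in the same orbit if and only if all functions in the set agree on them; here one can take the open subset where $c_d\neq0$ and all $c_{i(i+1)}\neq0$. *)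

theory Defs
  imports Complex_Main
begin

text \<open>Points of L are encoded by their coordinates c :: nat \<Rightarrow> complex,
  supported on {1..d}: c i (1 \<le> i < d) is c_{i(i+1)}, and c d is c_d.\<close>

definition L_pts :: "nat \<Rightarrow> (nat \<Rightarrow> complex) set" where
  "L_pts d = {c. \<forall>i. (i < 1 \<or> d < i) \<longrightarrow> c i = 0}"

definition vec_of :: "nat \<Rightarrow> (nat \<Rightarrow> complex) \<Rightarrow> nat \<Rightarrow> complex" where
  "vec_of d c = (\<lambda>i. if i = d then c d else 0)"

definition mat_of :: "nat \<Rightarrow> (nat \<Rightarrow> complex) \<Rightarrow> nat \<Rightarrow> nat \<Rightarrow> complex" where
  "mat_of d c = (\<lambda>i j. if 1 \<le> i \<and> i < d \<and> j = i + 1 then c i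
                      else if 1 \<le> j \<and> j < d \<and> i = j + 1 then - c j else 0)"

text \<open>Elements of W_d: diagonal sign matrices, given by w i \<in> {-1,1} for i \<in> {1..d}.\<close>
definition W_grp :: "nat \<Rightarrow> (nat \<Rightarrow> complex) set" where
  "W_grp d = {w. \<forall>i\<in>{1..d}. w i = 1 \<or> w i = -1}"

definition act_vec :: "(nat \<Rightarrow> complex) \<Rightarrow> (nat \<Rightarrow> complex) \<Rightarrow> nat \<Rightarrow> complex" where
  "act_vec w v = (\<lambda>i. w i * v i)"

definition act_mat :: "(nat \<Rightarrow> complex) \<Rightarrow> (nat \<Rightarrow> nat \<Rightarrow> complex) \<Rightarrow> nat \<Rightarrow> nat \<Rightarrow> complex" where
  "act_mat w M = (\<lambda>i j. w i * M i j * w j)"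

definition coords :: "nat \<Rightarrow> (nat \<Rightarrow> complex) \<Rightarrow> (nat \<Rightarrow> nat \<Rightarrow> complex) \<Rightarrow> nat \<Rightarrow> complex" where
  "coords d v M = (\<lambda>i. if 1 \<le> i \<and> i < d then M i (i + 1) else if i = d then v d else 0)"

definition act :: "nat \<Rightarrow> (nat \<Rightarrow> complex) \<Rightarrow> (nat \<Rightarrow> complex) \<Rightarrow> nat \<Rightarrow> complex" where
  "act d w c = coords d (act_vec w (vec_of d c)) (act_mat w (mat_of d c))"

inductive_set polyfun :: "nat \<Rightarrow> ((nat \<Rightarrow> complex) \<Rightarrow> complex) set" for d where
  const: "(\<lambda>x. a) \<in> polyfun d"
| coord: "1 \<le> i \<Longrightarrow> i \<le> d \<Longrightarrow> (\<lambda>x. x i) \<in> polyfun d"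
| add: "p \<in> polyfun d \<Longrightarrow> q \<in> polyfun d \<Longrightarrow> (\<lambda>x. p x + q x) \<in> polyfun d"
| mult: "p \<in> polyfun d \<Longrightarrow> q \<in> polyfun d \<Longrightarrow> (\<lambda>x. p x * q x) \<in> polyfun d"

definition is_ratfun :: "nat \<Rightarrow> ((nat \<Rightarrow> complex) \<Rightarrow> complex) \<Rightarrow> ((nat \<Rightarrow> complex) \<Rightarrow> complex) \<Rightarrow> bool" where
  "is_ratfun d p q \<longleftrightarrow> p \<in> polyfun d \<and> q \<in> polyfun d \<and> (\<exists>x\<in>L_pts d. q x \<noteq> 0)"

definition W_invariant_ratfun :: "nat \<Rightarrow> ((nat \<Rightarrow> complex) \<Rightarrow> complex) \<Rightarrow> ((nat \<Rightarrow> complex) \<Rightarrow> complex) \<Rightarrow> bool" where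
  "W_invariant_ratfun d p q \<longleftrightarrow> is_ratfun d p q \<and>
     (\<forall>w\<in>W_grp d. \<forall>x\<in>L_pts d. p (act d w x) * q x = p x * q (act d w x))"

definition sq_coords :: "(nat \<Rightarrow> complex) \<Rightarrow> nat \<Rightarrow> complex" where
  "sq_coords x = (\<lambda>i. (x i)^2)"

definition in_generated_field :: "nat \<Rightarrow> ((nat \<Rightarrow> complex) \<Rightarrow> complex) \<Rightarrow> ((nat \<Rightarrow> complex) \<Rightarrow> complex) \<Rightarrow> bool" where
  "in_generated_field d p q \<longleftrightarrow> (\<exists>P\<in>polyfun d. \<exists>Q\<in>polyfun d.
     (\<exists>x\<in>L_pts d. Q (sq_coords x) \<noteq> 0) \<and>
     (\<forall>x\<in>L_pts d. p x * Q (sq_coords x) = q x * P (sq_coords x)))"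

definition zariski_open :: "nat \<Rightarrow> (nat \<Rightarrow> complex) set \<Rightarrow> bool" where
  "zariski_open d U \<longleftrightarrow> (\<exists>S\<subseteq>polyfun d. U = {x\<in>L_pts d. \<exists>p\<in>S. p x \<noteq> 0})"

definition same_orbit :: "nat \<Rightarrow> (nat \<Rightarrow> complex) \<Rightarrow> (nat \<Rightarrow> complex) \<Rightarrow> bool" where
  "same_orbit d x y \<longleftrightarrow> (\<exists>w\<in>W_grp d. y = act d w x)"

definition separates_orbits :: "nat \<Rightarrow> ((nat \<Rightarrow> complex) \<Rightarrow> complex) set \<Rightarrow> bool" where
  "separates_orbits d F \<longleftrightarrow> (\<exists>U. zariski_open d U \<and> U \<noteq> {} \<and>
     (\<forall>x\<in>U. \<forall>y\<in>U. same_orbit d x y \<longleftrightarrow> (\<forall>f\<in>F. f x = f y)))"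

end

theory Submission
  imports Defs "HOL-Computational_Algebra.Polynomial"
begin

(* In the coordinates c_{i(i+1)}, c_d the sign matrix diag(w) multiplies c_{i(i+1)} by w_i w_{i+1}
   and c_d by w_d. Since w \<mapsto> (w_1 w_2, ..., w_{d-1} w_d, w_d) is a bijection of sign vectors
   (with inverse w_j = e_j e_{j+1} ... e_d), W_d acts on L as the full group of coordinate sign
   changes, so orbits are classified by the squared coordinates.
   For the field: if p/q is invariant under the sign change \<sigma> of one coordinate and c is any
   polynomial, then p c (q c)\<circ>\<sigma> and q c (q c)\<circ>\<sigma> are both \<sigma>-invariant, and passing from c to
   c (q c)\<circ>\<sigma> keeps p c and q c invariant under the other (commuting) sign changes. Doing this
   for every coordinate writes p/q as a quotient of two polynomials that are even in every
   coordinate, i.e. polynomials in the squares. The converse holds because the squares are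
   W_d-invariant. *)

lemma polyfun_cong:
  assumes "p \<in> polyfun d" "\<And>i. 1 \<le> i \<Longrightarrow> i \<le> d \<Longrightarrow> x i = y i"
  shows "p x = p y"
  using assms by (induction rule: polyfun.induct) auto

lemma polyfun_diff:
  assumes "p \<in> polyfun d" "q \<in> polyfun d"
  shows "(\<lambda>x. p x - q x) \<in> polyfun d"
proof -
  have "(\<lambda>x. p x + (-1) * q x) \<in> polyfun d"
    by (intro polyfun.add polyfun.mult assms polyfun.const)
  then show ?thesis by simp
qed

lemma polyfun_compose_scale:
  assumes "p \<in> polyfun d"
  shows "(\<lambda>x. p (\<lambda>j. c j * x j)) \<in> polyfun d"
  using assms
proof (induction rule: polyfun.induct)
  case (coord i)
  then show ?case using polyfun.mult[OF polyfun.const[of "c i"] polyfun.coord[of i]] by simp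
qed (auto intro: polyfun.intros)

lemma polyfun_compose_sq_coords:
  assumes "p \<in> polyfun d"
  shows "(\<lambda>x. p (sq_coords x)) \<in> polyfun d"
  using assms
proof (induction rule: polyfun.induct)
  case (coord i)
  then show ?case using polyfun.mult[OF polyfun.coord[of i] polyfun.coord[of i]]
    by (simp add: sq_coords_def power2_eq_square)
qed (auto intro: polyfun.intros)

lemma polyfun_on_line:
  assumes "p \<in> polyfun d"
  shows "\<exists>P. \<forall>t. p (\<lambda>i. u i + t * v i) = poly P t"
  using assms
proof (induction rule: polyfun.induct)
  case (const a)
  show ?case by (intro exI[of _ "[:a:]"]) simp
next
  case (coord i)
  show ?case by (intro exI[of _ "[:u i, v i:]"]) simp
next
  case (add p q)
  then obtain P Q where "\<forall>t. p (\<lambda>i. u i + t * v i) = poly P t" "\<forall>t. q (\<lambda>i. u i + t * v i) = poly Q t"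
    by blast
  then show ?case by (intro exI[of _ "P + Q"]) simp
next
  case (mult p q)
  then obtain P Q where "\<forall>t. p (\<lambda>i. u i + t * v i) = poly P t" "\<forall>t. q (\<lambda>i. u i + t * v i) = poly Q t"
    by blast
  then show ?case by (intro exI[of _ "P * Q"]) simp
qed

text \<open>Restricted to the line through a and b, f and g become nonzero univariate polynomials,
  whose product has only finitely many roots.\<close>

lemma polyfun_mult_nonzero:
  assumes f: "f \<in> polyfun d" and g: "g \<in> polyfun d"
    and a: "a \<in> L_pts d" "f a \<noteq> 0" and b: "b \<in> L_pts d" "g b \<noteq> 0"
  shows "\<exists>x\<in>L_pts d. f x * g x \<noteq> 0"
proof -
  define line where "line t = (\<lambda>i. a i + t * (b i - a i))" for t
  obtain P where P: "\<And>t. f (line t) = poly P t"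
    using polyfun_on_line[OF f, of a "\<lambda>i. b i - a i"] unfolding line_def by blast
  obtain Q where Q: "\<And>t. g (line t) = poly Q t"
    using polyfun_on_line[OF g, of a "\<lambda>i. b i - a i"] unfolding line_def by blast
  have "line 0 = a" "line 1 = b" by (auto simp: line_def)
  then have "P \<noteq> 0" "Q \<noteq> 0" using P[of 0] Q[of 1] a b by auto
  then have "finite {t. poly (P * Q) t = 0}" by (intro poly_roots_finite) simp
  then obtain t where "poly (P * Q) t \<noteq> 0"
    using infinite_UNIV_char_0 by (metis (mono_tags) UNIV_I ex_new_if_finite mem_Collect_eq)
  moreover have "line t \<in> L_pts d" using a(1) b(1) by (simp add: L_pts_def line_def)
  ultimately show ?thesis using P Q by (metis poly_mult)
qed

lemma polyfun_mult_zero_cancel: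
  assumes "f \<in> polyfun d" "g \<in> polyfun d" "b \<in> L_pts d" "g b \<noteq> 0"
    and "\<forall>x\<in>L_pts d. f x * g x = 0"
  shows "\<forall>x\<in>L_pts d. f x = 0"
  using polyfun_mult_nonzero[OF assms(1,2) _ _ assms(3,4)] assms(5) by blast

lemma L_pts_outside:
  assumes "x \<in> L_pts d" "\<not> (1 \<le> j \<and> j \<le> d)"
  shows "x j = 0"
proof -
  have "j < 1 \<or> d < j" using assms(2) by auto
  then show ?thesis using assms(1) unfolding L_pts_def by blast
qed

definition negate_coord :: "nat \<Rightarrow> (nat \<Rightarrow> complex) \<Rightarrow> nat \<Rightarrow> complex" where
  "negate_coord i x = x(i := - x i)"

lemma negate_coord_eq_scale: "negate_coord i x = (\<lambda>j. (if j = i then -1 else 1) * x j)"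
  by (auto simp: negate_coord_def)

lemma polyfun_compose_negate_coord: "p \<in> polyfun d \<Longrightarrow> (\<lambda>x. p (negate_coord i x)) \<in> polyfun d"
  unfolding negate_coord_eq_scale by (rule polyfun_compose_scale)

lemma negate_coord_in_L_pts: "x \<in> L_pts d \<Longrightarrow> negate_coord i x \<in> L_pts d"
  by (simp add: L_pts_def negate_coord_def)

lemma negate_coord_same [simp]: "negate_coord i x i = - x i"
  by (simp add: negate_coord_def)

lemma negate_coord_negate_coord [simp]: "negate_coord i (negate_coord i x) = x"
  by (auto simp: negate_coord_def)

lemma negate_coord_commute: "negate_coord i (negate_coord j x) = negate_coord j (negate_coord i x)"
  by (auto simp: negate_coord_def fun_upd_def)

lemma act_coord:
  assumes "1 \<le> i" "i \<le> d"
  shows "act d w x i = (if i < d then w i * w (Suc i) else w d) * x i"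
  using assms
  by (auto simp: act_def coords_def act_vec_def vec_of_def act_mat_def mat_of_def)

lemma act_outside: "\<not> (1 \<le> i \<and> i \<le> d) \<Longrightarrow> 1 \<le> d \<Longrightarrow> act d w x i = 0"
  by (auto simp: act_def coords_def)

lemma act_in_L_pts: "1 \<le> d \<Longrightarrow> act d w x \<in> L_pts d"
  by (auto simp: L_pts_def act_outside)

lemma polyfun_compose_act:
  assumes "p \<in> polyfun d"
  shows "(\<lambda>x. p (act d w x)) \<in> polyfun d"
proof -
  have "(\<lambda>x. p (act d w x)) = (\<lambda>x. p (\<lambda>j. (if j < d then w j * w (Suc j) else w d) * x j))"
    by (rule ext, rule polyfun_cong[OF assms]) (simp add: act_coord)
  then show ?thesis using polyfun_compose_scale[OF assms] by simp
qed

lemma act_eq_sign_change: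
  assumes "1 \<le> d" and e: "\<forall>j\<in>{1..d}. e j = 1 \<or> e j = -1"
  shows "\<exists>w\<in>W_grp d. \<forall>x\<in>L_pts d. act d w x = (\<lambda>j. e j * x j)"
proof
  define w where "w j = (\<Prod>k\<in>{j..d}. e k)" for j
  have w2: "(w j)^2 = 1" if "1 \<le> j" for j
    using e that by (auto simp: w_def prod_power_distrib power2_eq_1_iff intro!: prod.neutral)
  then show "w \<in> W_grp d" by (auto simp: W_grp_def power2_eq_1_iff)
  have "act d w x j = e j * x j" if x: "x \<in> L_pts d" for x j
  proof (cases "1 \<le> j \<and> j \<le> d")
    case True
    have "w j = e j * w (Suc j)" if "j < d"
      using that by (simp add: w_def prod.atLeast_Suc_atMost)
    then have "w j * w (Suc j) = e j" if "j < d"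
      using that w2[of "Suc j"] by (simp add: power2_eq_square mult.assoc)
    moreover have "w d = e d" by (simp add: w_def)
    ultimately show ?thesis using True by (auto simp: act_coord)
  next
    case False
    then show ?thesis using assms(1) x by (simp add: act_outside L_pts_outside)
  qed
  then show "\<forall>x\<in>L_pts d. act d w x = (\<lambda>j. e j * x j)" by auto
qed

lemma sq_coords_act:
  assumes "w \<in> W_grp d" "x \<in> L_pts d" "1 \<le> d"
  shows "sq_coords (act d w x) = sq_coords x"
proof
  fix j
  have w2: "(w k)^2 = 1" if "1 \<le> k" "k \<le> d" for k
    using assms(1) that unfolding W_grp_def by (auto simp: power2_eq_1_iff)
  show "sq_coords (act d w x) j = sq_coords x j"
  proof (cases "1 \<le> j \<and> j \<le> d")
    case True
    then show ?thesis using w2[of j] w2[of "Suc j"] w2[of d]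
      by (simp add: act_coord sq_coords_def power_mult_distrib)
  next
    case False
    then show ?thesis using assms by (simp add: act_outside L_pts_outside sq_coords_def)
  qed
qed

lemma separates_orbits_sq_coords:
  assumes "1 \<le> d"
  shows "separates_orbits d ((\<lambda>i x. (x i)^2) ` {1..d})"
  unfolding separates_orbits_def
proof (intro exI conjI ballI)
  show "zariski_open d (L_pts d)" unfolding zariski_open_def
    by (rule exI[of _ "{\<lambda>x. 1}"]) (auto intro: polyfun.const)
  show "L_pts d \<noteq> {}" by (auto simp: L_pts_def)
  fix x y assume x: "x \<in> L_pts d" and y: "y \<in> L_pts d"
  show "same_orbit d x y \<longleftrightarrow> (\<forall>f\<in>(\<lambda>i x. (x i)^2) ` {1..d}. f x = f y)"
  proof
    assume "same_orbit d x y"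
    then obtain w where "w \<in> W_grp d" "y = act d w x" unfolding same_orbit_def by blast
    then have "sq_coords y = sq_coords x" using sq_coords_act x assms by blast
    then show "\<forall>f\<in>(\<lambda>i x. (x i)^2) ` {1..d}. f x = f y" by (auto simp: sq_coords_def fun_eq_iff)
  next
    assume "\<forall>f\<in>(\<lambda>i x. (x i)^2) ` {1..d}. f x = f y"
    then have "(x j)^2 = (y j)^2" if "j \<in> {1..d}" for j
      using that by auto
    then have sign: "y j = x j \<or> y j = - x j" if "j \<in> {1..d}" for j
      using that by (metis power2_eq_iff equation_minus_iff)
    define e where "e j = (if y j = x j then 1 else -1 :: complex)" for j
    have "y j = e j * x j" for j
      using x y sign by (cases "j \<in> {1..d}") (auto simp: e_def L_pts_outside)
    then have "y = (\<lambda>j. e j * x j)" by blast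
    moreover have "\<exists>w\<in>W_grp d. \<forall>z\<in>L_pts d. act d w z = (\<lambda>j. e j * z j)"
      by (rule act_eq_sign_change[OF assms]) (simp add: e_def)
    then obtain w where "w \<in> W_grp d" "act d w x = (\<lambda>j. e j * x j)"
      using x by blast
    ultimately show "same_orbit d x y" unfolding same_orbit_def by metis
  qed
qed

definition negate_invariant :: "nat \<Rightarrow> nat \<Rightarrow> ((nat \<Rightarrow> complex) \<Rightarrow> complex) \<Rightarrow> bool" where
  "negate_invariant d i f \<longleftrightarrow> (\<forall>x\<in>L_pts d. f (negate_coord i x) = f x)"

lemma negate_invariant_mult:
  "negate_invariant d i f \<Longrightarrow> negate_invariant d i g \<Longrightarrow> negate_invariant d i (\<lambda>x. f x * g x)"
  by (simp add: negate_invariant_def)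

lemma negate_invariant_compose_negate_coord:
  "negate_invariant d j f \<Longrightarrow> negate_invariant d j (\<lambda>x. f (negate_coord i x))"
  by (simp add: negate_invariant_def negate_coord_commute[of i j] negate_coord_in_L_pts)

lemma negate_invariant_norm: "negate_invariant d i (\<lambda>x. f x * f (negate_coord i x))"
  by (simp add: negate_invariant_def mult.commute)

definition sq_coords_on :: "nat set \<Rightarrow> (nat \<Rightarrow> complex) \<Rightarrow> nat \<Rightarrow> complex" where
  "sq_coords_on K x = (\<lambda>i. if i \<in> K then (x i)^2 else x i)"

lemma polyfun_even_odd_decomp:
  assumes "F \<in> polyfun d" "1 \<le> i" "i \<le> d"
  shows "\<exists>A\<in>polyfun d. \<exists>B\<in>polyfun d.
    \<forall>y. F y = A (y(i := (y i)^2)) + y i * B (y(i := (y i)^2))"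
  using assms(1)
proof (induction rule: polyfun.induct)
  case (const a)
  show ?case by (rule bexI[of _ "\<lambda>x. a"], rule bexI[of _ "\<lambda>x. 0"]) (auto intro: polyfun.const)
next
  case (coord j)
  show ?case
  proof (cases "j = i")
    case True
    show ?thesis
      by (rule bexI[of _ "\<lambda>x. 0"], rule bexI[of _ "\<lambda>x. 1"]) (use True in \<open>auto intro: polyfun.const\<close>)
  next
    case False
    show ?thesis
      by (rule bexI[of _ "\<lambda>x. x j"], rule bexI[of _ "\<lambda>x. 0"])
        (use False coord in \<open>auto intro: polyfun.intros\<close>)
  qed
next
  case (add p q)
  then obtain A1 B1 A2 B2 where AB: "A1 \<in> polyfun d" "B1 \<in> polyfun d" "A2 \<in> polyfun d" "B2 \<in> polyfun d"
    "\<forall>y. p y = A1 (y(i := (y i)^2)) + y i * B1 (y(i := (y i)^2))"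
    "\<forall>y. q y = A2 (y(i := (y i)^2)) + y i * B2 (y(i := (y i)^2))" by metis
  show ?case
  proof (rule bexI[of _ "\<lambda>x. A1 x + A2 x"], rule bexI[of _ "\<lambda>x. B1 x + B2 x"])
    show "\<forall>y. p y + q y = (\<lambda>x. A1 x + A2 x) (y(i := (y i)^2))
        + y i * (\<lambda>x. B1 x + B2 x) (y(i := (y i)^2))"
      using AB(5,6) by (simp add: algebra_simps)
  qed (use AB(1-4) in \<open>auto intro: polyfun.add\<close>)
next
  case (mult p q)
  then obtain A1 B1 A2 B2 where AB: "A1 \<in> polyfun d" "B1 \<in> polyfun d" "A2 \<in> polyfun d" "B2 \<in> polyfun d"
    "\<forall>y. p y = A1 (y(i := (y i)^2)) + y i * B1 (y(i := (y i)^2))"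
    "\<forall>y. q y = A2 (y(i := (y i)^2)) + y i * B2 (y(i := (y i)^2))" by metis
  show ?case
  proof (rule bexI[of _ "\<lambda>x. A1 x * A2 x + x i * (B1 x * B2 x)"],
      rule bexI[of _ "\<lambda>x. A1 x * B2 x + B1 x * A2 x"])
    show "\<forall>y. p y * q y = (\<lambda>x. A1 x * A2 x + x i * (B1 x * B2 x)) (y(i := (y i)^2))
        + y i * (\<lambda>x. A1 x * B2 x + B1 x * A2 x) (y(i := (y i)^2))"
      using AB(5,6) by (simp add: algebra_simps power2_eq_square)
  qed (use AB(1-4) in \<open>auto intro!: polyfun.intros assms(2,3)\<close>)
qed

text \<open>The odd part of F vanishes because the invariance turns it into its own negative.\<close>

lemma polyfun_even_in_coord:
  assumes F: "F \<in> polyfun d" and i: "1 \<le> i" "i \<le> d" "i \<notin> K"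
    and f: "\<forall>x\<in>L_pts d. f x = F (sq_coords_on K x)"
    and inv: "negate_invariant d i f"
  shows "\<exists>G\<in>polyfun d. \<forall>x\<in>L_pts d. f x = G (sq_coords_on (insert i K) x)"
proof -
  obtain A B where A: "A \<in> polyfun d"
    and AB: "\<And>y. F y = A (y(i := (y i)^2)) + y i * B (y(i := (y i)^2))"
    using polyfun_even_odd_decomp[OF F i(1,2)] by blast
  define s where "s = sq_coords_on (insert i K)"
  have s_negate: "s (negate_coord i x) = s x" for x
    by (auto simp: s_def sq_coords_on_def negate_coord_def)
  have f_split: "f x = A (s x) + x i * B (s x)" if "x \<in> L_pts d" for x
  proof -
    have "(sq_coords_on K x)(i := (sq_coords_on K x i)^2) = s x" "sq_coords_on K x i = x i"
      using i(3) by (auto simp: s_def sq_coords_on_def)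
    then show ?thesis using f that AB by metis
  qed
  have "f x = A (s x)" if x: "x \<in> L_pts d" for x
  proof -
    have "A (s x) + x i * B (s x) = A (s x) - x i * B (s x)"
      using f_split[OF x] f_split[OF negate_coord_in_L_pts[OF x, of i]] inv x
      by (simp add: s_negate negate_invariant_def)
    then show "f x = A (s x)" using f_split[OF x] by simp
  qed
  then show ?thesis using A unfolding s_def by blast
qed

lemma polyfun_even_on_coords:
  assumes f: "f \<in> polyfun d" and K: "K \<subseteq> {1..d}" and inv: "\<forall>i\<in>K. negate_invariant d i f"
  shows "\<exists>G\<in>polyfun d. \<forall>x\<in>L_pts d. f x = G (sq_coords_on K x)"
  using finite_subset[OF K finite_atLeastAtMost] K inv
proof (induction K rule: finite_induct)
  case empty
  have "sq_coords_on {} x = x" for x by (simp add: sq_coords_on_def)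
  then show ?case using f by auto
next
  case (insert i K)
  then show ?case using polyfun_even_in_coord by auto
qed

lemma polyfun_even_eq_sq_coords:
  assumes f: "f \<in> polyfun d" and inv: "\<forall>i\<in>{1..d}. negate_invariant d i f"
  shows "\<exists>G\<in>polyfun d. \<forall>x\<in>L_pts d. f x = G (sq_coords x)"
proof -
  obtain G where G: "G \<in> polyfun d" "\<forall>x\<in>L_pts d. f x = G (sq_coords_on {1..d} x)"
    using polyfun_even_on_coords[OF f order_refl inv] by blast
  have "sq_coords_on {1..d} x = sq_coords x" if "x \<in> L_pts d" for x
    using that by (auto simp: sq_coords_on_def sq_coords_def L_pts_outside)
  then show ?thesis using G by auto
qed

lemma negate_invariant_multiplier:
  assumes p: "p \<in> polyfun d" and q: "q \<in> polyfun d" and x0: "x0 \<in> L_pts d" "q x0 \<noteq> 0"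
    and "finite J"
    and ratio_inv: "\<And>i x. i \<in> J \<Longrightarrow> x \<in> L_pts d \<Longrightarrow>
      p (negate_coord i x) * q x = p x * q (negate_coord i x)"
  shows "\<exists>c\<in>polyfun d. (\<exists>x\<in>L_pts d. q x * c x \<noteq> 0) \<and>
    (\<forall>i\<in>J. negate_invariant d i (\<lambda>x. p x * c x) \<and> negate_invariant d i (\<lambda>x. q x * c x))"
  using \<open>finite J\<close> ratio_inv
proof (induction J rule: finite_induct)
  case empty
  show ?case using x0 by (intro bexI[of _ "\<lambda>x. 1"]) (auto intro: polyfun.const)
next
  case (insert i J)
  then obtain c y where c: "c \<in> polyfun d" and y: "y \<in> L_pts d" "q y * c y \<noteq> 0"
    and c_inv: "\<forall>j\<in>J. negate_invariant d j (\<lambda>x. p x * c x) \<and> negate_invariant d j (\<lambda>x. q x * c x)"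
    by blast
  define r where "r = (\<lambda>x. q x * c x)"
  define c' where "c' x = c x * r (negate_coord i x)" for x
  have r: "r \<in> polyfun d" unfolding r_def by (intro polyfun.mult q c)
  have r_inv: "\<forall>j\<in>J. negate_invariant d j r" using c_inv by (simp add: r_def)
  have "c' \<in> polyfun d"
    unfolding c'_def[abs_def] by (intro polyfun.mult c polyfun_compose_negate_coord r)
  moreover have "\<exists>x\<in>L_pts d. q x * c' x \<noteq> 0"
    using polyfun_mult_nonzero[OF r polyfun_compose_negate_coord[OF r], of y "negate_coord i y"]
      y negate_coord_in_L_pts[OF y(1)]
    by (auto simp: r_def c'_def mult.assoc)
  moreover have "negate_invariant d j (\<lambda>x. p x * c' x) \<and> negate_invariant d j (\<lambda>x. q x * c' x)"
    if "j \<in> insert i J" for j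
  proof (cases "j = i")
    case True
    have "negate_invariant d i (\<lambda>x. p x * c' x)"
      using insert.prems[of i] by (auto simp: negate_invariant_def c'_def r_def mult_ac)
    moreover have "(\<lambda>x. q x * c' x) = (\<lambda>x. r x * r (negate_coord i x))"
      by (auto simp: c'_def r_def mult_ac)
    ultimately show ?thesis using True negate_invariant_norm by metis
  next
    case False
    then have "j \<in> J" using that by simp
    have "(\<lambda>x. p x * c' x) = (\<lambda>x. (p x * c x) * r (negate_coord i x))"
      "(\<lambda>x. q x * c' x) = (\<lambda>x. r x * r (negate_coord i x))"
      by (auto simp: c'_def r_def mult_ac)
    then show ?thesis
      using c_inv r_inv \<open>j \<in> J\<close>
      by (simp add: negate_invariant_mult negate_invariant_compose_negate_coord)
  qed
  ultimately show ?case by blast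
qed

lemma W_invariant_in_generated_field:
  assumes "1 \<le> d" "W_invariant_ratfun d p q"
  shows "in_generated_field d p q"
proof -
  obtain x0 where p: "p \<in> polyfun d" and q: "q \<in> polyfun d" and x0: "x0 \<in> L_pts d" "q x0 \<noteq> 0"
    and W_inv: "\<forall>w\<in>W_grp d. \<forall>x\<in>L_pts d. p (act d w x) * q x = p x * q (act d w x)"
    using assms(2) unfolding W_invariant_ratfun_def is_ratfun_def by blast
  have "p (negate_coord i x) * q x = p x * q (negate_coord i x)"
    if "i \<in> {1..d}" "x \<in> L_pts d" for i x
  proof -
    have "\<exists>w\<in>W_grp d. \<forall>x\<in>L_pts d. act d w x = negate_coord i x"
      unfolding negate_coord_eq_scale by (rule act_eq_sign_change[OF assms(1)]) simp
    then obtain w where "w \<in> W_grp d" "\<forall>x\<in>L_pts d. act d w x = negate_coord i x" by blast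
    then show ?thesis using W_inv that by auto
  qed
  then obtain c x1 where c: "c \<in> polyfun d" and x1: "x1 \<in> L_pts d" "q x1 * c x1 \<noteq> 0"
    and c_inv: "\<forall>i\<in>{1..d}. negate_invariant d i (\<lambda>x. p x * c x) \<and> negate_invariant d i (\<lambda>x. q x * c x)"
    using negate_invariant_multiplier[OF p q x0, of "{1..d}"] by blast
  obtain A where "A \<in> polyfun d" and A: "\<forall>x\<in>L_pts d. p x * c x = A (sq_coords x)"
    using polyfun_even_eq_sq_coords[OF polyfun.mult[OF p c]] c_inv by blast
  moreover obtain B where "B \<in> polyfun d" and B: "\<forall>x\<in>L_pts d. q x * c x = B (sq_coords x)"
    using polyfun_even_eq_sq_coords[OF polyfun.mult[OF q c]] c_inv by blast
  moreover have "\<forall>x\<in>L_pts d. p x * B (sq_coords x) = q x * A (sq_coords x)"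
    using A B by (metis mult.left_commute)
  ultimately show ?thesis unfolding in_generated_field_def using x1 B by metis
qed

lemma in_generated_field_W_invariant:
  assumes d: "1 \<le> d" and R: "is_ratfun d p q" and G: "in_generated_field d p q"
  shows "W_invariant_ratfun d p q"
proof -
  from R have p: "p \<in> polyfun d" and q: "q \<in> polyfun d" unfolding is_ratfun_def by auto
  from G obtain P Q y0 where "Q \<in> polyfun d" and y0: "y0 \<in> L_pts d" "Q (sq_coords y0) \<noteq> 0"
    and PQ: "\<forall>x\<in>L_pts d. p x * Q (sq_coords x) = q x * P (sq_coords x)"
    unfolding in_generated_field_def by blast
  have "\<forall>x\<in>L_pts d. p (act d w x) * q x - p x * q (act d w x) = 0" if w: "w \<in> W_grp d" for w
  proof (rule polyfun_mult_zero_cancel)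
    show "(\<lambda>x. p (act d w x) * q x - p x * q (act d w x)) \<in> polyfun d"
      by (intro polyfun_diff polyfun.mult p q polyfun_compose_act)
    show "(\<lambda>x. Q (sq_coords x)) \<in> polyfun d" by (rule polyfun_compose_sq_coords) fact
    show "\<forall>x\<in>L_pts d. (p (act d w x) * q x - p x * q (act d w x)) * Q (sq_coords x) = 0"
    proof
      fix x assume x: "x \<in> L_pts d"
      have "p (act d w x) * Q (sq_coords x) = q (act d w x) * P (sq_coords x)"
        using PQ act_in_L_pts[OF d] sq_coords_act[OF w x d] by metis
      then show "(p (act d w x) * q x - p x * q (act d w x)) * Q (sq_coords x) = 0"
        using PQ[rule_format, OF x] by algebra
    qed
  qed (use y0 in auto)
  then show ?thesis using R unfolding W_invariant_ratfun_def by simp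
qed

theorem proposition3p10:
  fixes d :: nat
  assumes "d \<ge> 2"
  shows "separates_orbits d ((\<lambda>i x. (x i)^2) ` {1..d})
    \<and> (\<forall>p q. W_invariant_ratfun d p q \<longleftrightarrow> is_ratfun d p q \<and> in_generated_field d p q)"
proof -
  have d: "1 \<le> d" using assms by simp
  show ?thesis
    using separates_orbits_sq_coords[OF d] W_invariant_in_generated_field[OF d]
      in_generated_field_W_invariant[OF d]
    unfolding W_invariant_ratfun_def by blast
qed

end
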